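(* Let $\mathbf{A}$ be a real $n\times n$ matrix that is totally $J$-sign-symmetric (TJS) (respectively, strictly totally $J$-sign-symmetric (STJS)). Then $\mathbf{A}^T$, as well as every principal submatrix of $\mathbf{A}$ and of $\mathbf{A}^T$, is TJS (respectively, STJS).
   Context: For $J\subseteq[m]=\{1,\ldots,m\}$, $J^c=[m]\setminus J$, an $m\times m$ matrix $(a_{ik})$ is $J$-sign-symmetric if $a_{ik}\ge0$ on $(J\times J)\cup(J^c\times J^c)$ and $a_{ik}\le0$ on $(J\times J^c)\cup(J^c\times J)$; strictly $J$-sign-symmetric if these inequalities are strict. The $j$th compound matrix $\mathbf{A}^{(j)}$ is the $\binom{n}{j}\times\binom{n}{j}$ matrix of all $j\times j$ minors with index sets in lexicographic order. $\mathbf{A}$ is TJS (resp. STJS) if $\mathbf{A}$ is $J$-sign-symmetric (resp. strictly $J$-sign-symmetric) for some $J\subseteq[n]$ and for every $j=2,\ldots,n$ the compound $\mathbf{A}^{(j)}$ is $J_j$-sign-symmetric (resp. strictly $J_j$-sign-symmetric) for some subset $J_j$ of its index set. A principal submatrix $\mathbf{A}(M)$, $M\subseteq[n]$, consists of the rows and columns with indices in $M$. *)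

theory Defs
  imports "Jordan_Normal_Form.Determinant" "Jordan_Normal_Form.DL_Submatrix"
begin

definition sign_sym_on :: "bool \<Rightarrow> 'i set \<Rightarrow> 'i set \<Rightarrow> ('i \<Rightarrow> 'i \<Rightarrow> real) \<Rightarrow> bool" where
  "sign_sym_on strict I J a \<longleftrightarrow> J \<subseteq> I \<and>
     (\<forall>i\<in>I. \<forall>k\<in>I.
        ((i \<in> J) = (k \<in> J) \<longrightarrow> (if strict then a i k > 0 else a i k \<ge> 0)) \<and>
        ((i \<in> J) \<noteq> (k \<in> J) \<longrightarrow> (if strict then a i k < 0 else a i k \<le> 0)))"

text \<open>Minor of A with row index set S and column index set T (indices in increasing order).\<close>
definition minor :: "real mat \<Rightarrow> nat set \<Rightarrow> nat set \<Rightarrow> real" where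
  "minor A S T = det (submatrix A S T)"

definition compound_index :: "nat \<Rightarrow> nat \<Rightarrow> nat set set" where
  "compound_index n j = {S. S \<subseteq> {0..<n} \<and> card S = j}"

definition total_sign_sym :: "bool \<Rightarrow> real mat \<Rightarrow> bool" where
  "total_sign_sym strict A \<longleftrightarrow> A \<in> carrier_mat (dim_row A) (dim_row A) \<and>
     (\<exists>J. sign_sym_on strict {0..<dim_row A} J (\<lambda>i k. A $$ (i, k))) \<and>
     (\<forall>j\<in>{2..dim_row A}. \<exists>Jj. sign_sym_on strict (compound_index (dim_row A) j) Jj (minor A))"

abbreviation TJS :: "real mat \<Rightarrow> bool" where "TJS \<equiv> total_sign_sym False"
abbreviation STJS :: "real mat \<Rightarrow> bool" where "STJS \<equiv> total_sign_sym True"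

definition principal_submatrix :: "real mat \<Rightarrow> nat set \<Rightarrow> real mat" where
  "principal_submatrix A M = submatrix A M M"

end

theory Submission
  imports Defs
begin

text \<open>Transposition transposes every compound matrix, since a minor of the transpose is the
  transposed minor, and sign-symmetry with respect to a fixed set is invariant under swapping the
  two indices; so the same sets J, J_j serve for the transpose. The j x j minors of a principal
  submatrix A(M) are the minors of A whose row and column index sets lie in M, reindexed by the
  increasing enumeration pick M of M; pulling J_j back along this reindexing shows that A(M)
  inherits every sign pattern of A.\<close>

lemma sign_sym_on_swap:
  assumes "sign_sym_on s I J a" "\<And>x y. x \<in> I \<Longrightarrow> y \<in> I \<Longrightarrow> b x y = a y x"
  shows "sign_sym_on s I J b"
  using assms unfolding sign_sym_on_def by (smt (verit))

lemma sign_sym_on_pullback: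
  assumes "sign_sym_on s I J a" "f ` I' \<subseteq> I"
    and "\<And>x y. x \<in> I' \<Longrightarrow> y \<in> I' \<Longrightarrow> b x y = a (f x) (f y)"
  shows "sign_sym_on s I' {x \<in> I'. f x \<in> J} b"
  using assms unfolding sign_sym_on_def image_subset_iff by auto

lemma pick_less_pick_iff:
  assumes "m < card S" "n < card S"
  shows "pick S m < pick S n \<longleftrightarrow> m < n"
  using assms pick_mono[of _ S] by (metis not_less_iff_gr_or_eq order_less_asym')

lemma inj_on_pick: "inj_on (pick S) {..<card S}"
  by (rule inj_onI) (metis lessThan_iff nat_neq_iff pick_less_pick_iff)

lemma pick_image_pick:
  assumes "T \<subseteq> {..<card S}" "n < card T"
  shows "pick (pick S ` T) n = pick S (pick T n)"
proof -
  let ?t = "pick T n"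
  have t: "?t \<in> T" "?t < card S" using assms pick_in_set by blast+
  have "{y \<in> pick S ` T. y < pick S ?t} = pick S ` {x \<in> T. x < ?t}"
    using assms t pick_less_pick_iff by auto
  moreover have "inj_on (pick S) {x \<in> T. x < ?t}"
    using assms(1) by (auto intro: inj_on_subset[OF inj_on_pick])
  ultimately have "card {y \<in> pick S ` T. y < pick S ?t} = n"
    using card_image card_pick assms(2) by metis
  with t(1) show ?thesis using pick_card_in_set by (metis imageI)
qed

lemma pick_image_subset:
  assumes "T \<subseteq> {..<card S}"
  shows "pick S ` T \<subseteq> S"
  using assms pick_in_set by blast

lemma card_pick_image:
  assumes "T \<subseteq> {..<card S}"
  shows "card (pick S ` T) = card T"
  using assms by (auto intro: card_image inj_on_subset[OF inj_on_pick])

lemma submatrix_transpose_mat: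
  "submatrix (transpose_mat A) I J = transpose_mat (submatrix A J I)"
proof (rule eq_matI)
  fix i j
  assume "i < dim_row (transpose_mat (submatrix A J I))" "j < dim_col (transpose_mat (submatrix A J I))"
  then have "i < card {k. k < dim_col A \<and> k \<in> I}" "j < card {k. k < dim_row A \<and> k \<in> J}"
    by (simp_all add: dim_submatrix)
  then show "submatrix (transpose_mat A) I J $$ (i, j) = transpose_mat (submatrix A J I) $$ (i, j)"
    using pick_le by (simp add: submatrix_index dim_submatrix)
qed (simp_all add: dim_submatrix)

lemma submatrix_submatrix:
  assumes I: "I \<subseteq> {..<dim_row A}" and J: "J \<subseteq> {..<dim_col A}"
    and I': "I' \<subseteq> {..<card I}" and J': "J' \<subseteq> {..<card J}"
  shows "submatrix (submatrix A I J) I' J' = submatrix A (pick I ` I') (pick J ` J')"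
proof -
  from pick_image_subset[OF I'] pick_image_subset[OF J']
  have "{i. i < dim_row A \<and> i \<in> I} = I" "{j. j < dim_col A \<and> j \<in> J} = J"
    "{i. i < dim_row A \<and> i \<in> pick I ` I'} = pick I ` I'"
    "{j. j < dim_col A \<and> j \<in> pick J ` J'} = pick J ` J'"
    "{i. i < card I \<and> i \<in> I'} = I'" "{j. j < card J \<and> j \<in> J'} = J'"
    using I J I' J' by auto
  note dims = dim_submatrix this card_pick_image[OF I'] card_pick_image[OF J']
  show ?thesis
  proof (rule eq_matI)
    fix i j
    assume "i < dim_row (submatrix A (pick I ` I') (pick J ` J'))"
      "j < dim_col (submatrix A (pick I ` I') (pick J ` J'))"
    then have ij: "i < card I'" "j < card J'" by (simp_all only: dims)
    then have picks: "pick I' i < card I" "pick J' j < card J"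
      using I' J' pick_in_set by blast+
    have "submatrix (submatrix A I J) I' J' $$ (i, j) = submatrix A I J $$ (pick I' i, pick J' j)"
      by (rule submatrix_index) (simp_all only: dims ij)
    also have "\<dots> = A $$ (pick I (pick I' i), pick J (pick J' j))"
      by (rule submatrix_index) (simp_all only: dims picks)
    also have "\<dots> = submatrix A (pick I ` I') (pick J ` J') $$ (i, j)"
      unfolding pick_image_pick[OF I' ij(1), symmetric] pick_image_pick[OF J' ij(2), symmetric]
      by (rule submatrix_index[symmetric]) (simp_all only: dims ij)
    finally show "submatrix (submatrix A I J) I' J' $$ (i, j)
        = submatrix A (pick I ` I') (pick J ` J') $$ (i, j)" .
  qed (simp_all only: dims)
qed

lemma minor_transpose_mat:
  assumes "I \<subseteq> {..<dim_col A}" "J \<subseteq> {..<dim_row A}" "card I = card J"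
  shows "minor (transpose_mat A) I J = minor A J I"
proof -
  have rows: "{i. i < dim_row A \<and> i \<in> J} = J" and cols: "{j. j < dim_col A \<and> j \<in> I} = I"
    using assms(1,2) by auto
  have "submatrix A J I \<in> carrier_mat (card J) (card J)"
    by (rule carrier_matI) (simp_all only: dim_submatrix rows cols assms(3))
  then show ?thesis
    unfolding minor_def submatrix_transpose_mat by (rule det_transpose)
qed

lemma pick_image_compound_index:
  assumes "M \<subseteq> {0..<n}" "S \<in> compound_index (card M) j"
  shows "pick M ` S \<in> compound_index n j"
proof -
  have S: "S \<subseteq> {..<card M}" "card S = j"
    using assms(2) unfolding compound_index_def by auto
  have "card (pick M ` S) = card S"
    using S(1) by (rule card_pick_image)
  moreover have "pick M ` S \<subseteq> M"
    using S(1) by (rule pick_image_subset)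
  ultimately show ?thesis
    using assms(1) S(2) unfolding compound_index_def by auto
qed

lemma total_sign_sym_transpose_mat:
  assumes "total_sign_sym s A"
  shows "total_sign_sym s (transpose_mat A)"
proof -
  let ?n = "dim_row A"
  note tss = assms[unfolded total_sign_sym_def]
  have A: "A \<in> carrier_mat ?n ?n"
    using tss by (rule conjunct1)
  then have cols: "dim_col A = ?n" by (rule carrier_matD)
  have Jj: "\<forall>j\<in>{2..?n}. \<exists>Jj. sign_sym_on s (compound_index ?n j) Jj (minor A)"
    using tss by (elim conjE)
  obtain J where J: "sign_sym_on s {0..<?n} J (\<lambda>i k. A $$ (i, k))"
    using tss by (elim conjE exE)
  have "sign_sym_on s {0..<?n} J (\<lambda>i k. transpose_mat A $$ (i, k))"
  proof (rule sign_sym_on_swap[OF J])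
    fix i k assume "i \<in> {0..<?n}" "k \<in> {0..<?n}"
    with cols show "transpose_mat A $$ (i, k) = A $$ (k, i)" by simp
  qed
  then have entries: "\<exists>J. sign_sym_on s {0..<?n} J (\<lambda>i k. transpose_mat A $$ (i, k))" ..
  have minors: "\<exists>Jj. sign_sym_on s (compound_index ?n j) Jj (minor (transpose_mat A))"
    if "j \<in> {2..?n}" for j
  proof -
    from Jj that obtain Jj where Jj: "sign_sym_on s (compound_index ?n j) Jj (minor A)" by blast
    have "sign_sym_on s (compound_index ?n j) Jj (minor (transpose_mat A))"
    proof (rule sign_sym_on_swap[OF Jj])
      fix S T assume "S \<in> compound_index ?n j" "T \<in> compound_index ?n j"
      then show "minor (transpose_mat A) S T = minor A T S"
        using cols by (intro minor_transpose_mat) (auto simp: compound_index_def)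
    qed
    then show ?thesis ..
  qed
  have AT: "transpose_mat A \<in> carrier_mat ?n ?n"
    unfolding transpose_carrier_mat by (rule A)
  then have dim: "dim_row (transpose_mat A) = ?n" by (rule carrier_matD)
  show ?thesis
    unfolding total_sign_sym_def dim using AT entries minors by (intro conjI ballI)
qed

lemma principal_submatrix_carrier_mat:
  assumes "A \<in> carrier_mat n n" "M \<subseteq> {0..<n}"
  shows "principal_submatrix A M \<in> carrier_mat (card M) (card M)"
proof -
  have "{i. i < n \<and> i \<in> M} = M" using assms(2) by auto
  with assms(1) show ?thesis
    unfolding principal_submatrix_def carrier_mat_def by (simp add: dim_submatrix)
qed

lemma total_sign_sym_principal_submatrix:
  assumes "total_sign_sym s A" "A \<in> carrier_mat n n" "M \<subseteq> {0..<n}"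
  shows "total_sign_sym s (principal_submatrix A M)"
proof -
  let ?B = "principal_submatrix A M" and ?m = "card M"
  have B: "?B \<in> carrier_mat ?m ?m"
    using assms(2,3) by (rule principal_submatrix_carrier_mat)
  have dims: "dim_row A = n" "dim_col A = n" using assms(2) by auto
  have M: "M \<subseteq> {..<dim_row A}" "M \<subseteq> {..<dim_col A}" using assms(3) dims by auto
  obtain J where J: "sign_sym_on s {0..<n} J (\<lambda>i k. A $$ (i, k))"
    using assms(1) dims unfolding total_sign_sym_def by auto
  have Jj: "\<forall>j\<in>{2..n}. \<exists>Jj. sign_sym_on s (compound_index n j) Jj (minor A)"
    using assms(1) dims unfolding total_sign_sym_def by auto
  have "pick M ` {0..<?m} \<subseteq> {0..<n}"
    using pick_image_subset[of "{0..<?m}" M] assms(3) by (simp add: atLeast0LessThan)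
  moreover have "?B $$ (i, k) = A $$ (pick M i, pick M k)"
    if "i \<in> {0..<?m}" "k \<in> {0..<?m}" for i k
  proof -
    have "{i. i < dim_row A \<and> i \<in> M} = M" "{i. i < dim_col A \<and> i \<in> M} = M"
      using M by auto
    with that show ?thesis
      unfolding principal_submatrix_def by (simp add: submatrix_index)
  qed
  ultimately have "sign_sym_on s {0..<?m} {i \<in> {0..<?m}. pick M i \<in> J} (\<lambda>i k. ?B $$ (i, k))"
    by (rule sign_sym_on_pullback[OF J])
  then have entries: "\<exists>J. sign_sym_on s {0..<?m} J (\<lambda>i k. ?B $$ (i, k))" ..
  have minors: "\<exists>Jj. sign_sym_on s (compound_index ?m j) Jj (minor ?B)"
    if j: "j \<in> {2..?m}" for j
  proof -
    have "j \<in> {2..n}"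
      using j card_mono[OF _ assms(3)] by auto
    with Jj obtain Jj where Jj: "sign_sym_on s (compound_index n j) Jj (minor A)" by blast
    have reindex: "(\<lambda>S. pick M ` S) ` compound_index ?m j \<subseteq> compound_index n j"
      using assms(3) pick_image_compound_index by blast
    have minor_eq: "minor ?B S T = minor A (pick M ` S) (pick M ` T)"
      if "S \<in> compound_index ?m j" "T \<in> compound_index ?m j" for S T
      using that M unfolding minor_def principal_submatrix_def compound_index_def
      by (subst submatrix_submatrix) auto
    show ?thesis
      by (rule exI, rule sign_sym_on_pullback[OF Jj reindex minor_eq])
  qed
  from B entries minors show ?thesis
    unfolding total_sign_sym_def by auto
qed

theorem proposition29:
  fixes A :: "real mat" and n :: nat
  assumes "A \<in> carrier_mat n n"
  shows "(TJS A \<longrightarrow> TJS (transpose_mat A) \<and>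
            (\<forall>M. M \<subseteq> {0..<n} \<longrightarrow>
               TJS (principal_submatrix A M) \<and> TJS (principal_submatrix (transpose_mat A) M)))
       \<and> (STJS A \<longrightarrow> STJS (transpose_mat A) \<and>
            (\<forall>M. M \<subseteq> {0..<n} \<longrightarrow>
               STJS (principal_submatrix A M) \<and> STJS (principal_submatrix (transpose_mat A) M)))"
proof -
  have "transpose_mat A \<in> carrier_mat n n" using assms by simp
  then show ?thesis
    using total_sign_sym_transpose_mat total_sign_sym_principal_submatrix[OF _ assms]
      total_sign_sym_principal_submatrix[of _ "transpose_mat A"] by blast
qed

end
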